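(* Let $\delta\ge3$. A $\delta$-PHO $K^{(\delta)}$ is separable within a rotation of Cartesian coordinates if and only if $\operatorname{rank}\mathcal M(K^{(\delta)})=1$.
   Context: A $\delta$-PHO is the Hamiltonian $K^{(\delta)}(q,p)=\tfrac12\sum_{j=1}^2(p_j^2+q_j^2)+V^{(\delta)}(q)$ on $\mathbb R^4$, with $V^{(\delta)}(q)=\sum_{h=0}^{\delta}v^{(\delta)}_h\binom{\delta}{h}q_1^hq_2^{\delta-h}$, real coefficients, $V^{(\delta)}\not\equiv0$. $\mathcal M(K^{(\delta)})$ is the $2\times(\delta-1)$ matrix whose $(h+1)$-st column, $h=0,\dots,\delta-2$, is $\big(v^{(\delta)}_h-v^{(\delta)}_{h+2},\ 2v^{(\delta)}_{h+1}\big)^T$. With $\sigma(\psi)=\begin{pmatrix}\cos\psi&-\sin\psi\\ \sin\psi&\cos\psi\end{pmatrix}$, the $\delta$-PHO is separable within a rotation of Cartesian coordinates if there exist $\psi\in[0,2\pi)$ and reals $(\tilde v_0,\tilde v_\delta)\ne(0,0)$ with $V^{(\delta)}(\sigma(\psi)^{-1}\tilde q)=\tilde v_0\tilde q_2^{\delta}+\tilde v_\delta\tilde q_1^{\delta}$ for all $\tilde q\in\mathbb R^2$. *)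

theory Defs
  imports Complex_Main "Jordan_Normal_Form.DL_Rank"
begin

definition PHO_pot :: "nat \<Rightarrow> (nat \<Rightarrow> real) \<Rightarrow> real \<Rightarrow> real \<Rightarrow> real" where
  "PHO_pot d v q1 q2 = (\<Sum>h=0..d. v h * real (d choose h) * q1 ^ h * q2 ^ (d - h))"

definition PHO_matrix :: "nat \<Rightarrow> (nat \<Rightarrow> real) \<Rightarrow> real mat" where
  "PHO_matrix d v = mat 2 (d - 1) (\<lambda>(i, h). if i = 0 then v h - v (h + 2) else 2 * v (h + 1))"

text \<open>Inverse rotation: sigma(psi)^(-1) (t1,t2) = (cos psi t1 + sin psi t2, - sin psi t1 + cos psi t2).\<close>
definition separable_within_rotation :: "nat \<Rightarrow> (nat \<Rightarrow> real) \<Rightarrow> bool" where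
  "separable_within_rotation d v \<longleftrightarrow>
     (\<exists>\<psi> a b. 0 \<le> \<psi> \<and> \<psi> < 2 * pi \<and> (a, b) \<noteq> (0, 0) \<and>
        (\<forall>t1 t2. PHO_pot d v (cos \<psi> * t1 + sin \<psi> * t2) (- sin \<psi> * t1 + cos \<psi> * t2)
                 = a * t2 ^ d + b * t1 ^ d))"

end

theory Submission
  imports Defs "Jordan_Normal_Form.DL_Rank_Submatrix"
begin

text \<open>Write c = cos \<psi> and s = sin \<psi>. Undoing the rotation, the separable potential
  a t2^d + b t1^d becomes a (s q1 + c q2)^d + b (c q1 - s q2)^d, and the coefficients v h of
  every such binomial sum satisfy the three-term recurrence
  c s (v h - v (h+2)) = (c^2 - s^2) v (h+1); that is, (sin 2\<psi>, -cos 2\<psi>) annihilates every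
  column of M from the left, so M has rank at most 1. Conversely, a nonzero left kernel vector
  (P, Q) of M is a positive multiple of (sin 2\<psi>, -cos 2\<psi>) for some \<psi>, and the resulting
  second-order recurrence has a two-dimensional solution space, which is exhausted by the
  coefficient sequences of (s q1 + c q2)^d and (c q1 - s q2)^d. For d \<ge> 3 a nonzero potential
  gives a nonzero M, so rank M \<le> 1 means rank M = 1.\<close>

lemma det_2x2:
  assumes "(A :: 'a :: comm_ring_1 mat) \<in> carrier_mat 2 2"
  shows "det A = A $$ (0,0) * A $$ (1,1) - A $$ (0,1) * A $$ (1,0)"
proof -
  have "det A = A $$ (0,0) * cofactor A 0 0 + A $$ (1,0) * cofactor A 1 0"
    using laplace_expansion_column[OF assms, of 0] by (simp add: numeral_2_eq_2)
  moreover have "cofactor A 0 0 = A $$ (1,1)" "cofactor A 1 0 = - A $$ (0,1)"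
    unfolding cofactor_def using assms
    by (subst det_single; auto simp: mat_delete_def delete_index_def insert_index_def)+
  ultimately show ?thesis by simp
qed

lemma pick_doubleton:
  assumes "j1 < j2"
  shows "pick {j1, j2} 0 = j1" "pick {j1, j2} 1 = j2"
proof -
  show j1: "pick {j1, j2} 0 = j1" using assms by (auto intro!: Least_equality)
  show "pick {j1, j2} 1 = j2" using assms j1 by (auto intro!: Least_equality)
qed

lemma rank_ge_1_if_entry_nonzero:
  assumes A: "(A :: 'a :: field mat) \<in> carrier_mat m n" and "i < m" "j < n" "A $$ (i,j) \<noteq> 0"
  shows "1 \<le> vec_space.rank m A"
proof -
  have rows: "{k. k < m \<and> k \<in> {i}} = {i}" and cols: "{k. k < n \<and> k \<in> {j}} = {j}"
    using assms by auto
  have "submatrix A {i} {j} \<in> carrier_mat 1 1"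
    using A rows cols by (auto simp: submatrix_def)
  moreover have "(LEAST k. k = i) = i" "(LEAST k. k = j) = j"
    by (auto intro: Least_equality)
  ultimately have "det (submatrix A {i} {j}) = A $$ (i,j)"
    using A rows cols by (simp add: det_single submatrix_def)
  then show ?thesis
    using vec_space.rank_gt_minor[OF A, of "{i}" "{j}"] assms(4) cols by simp
qed

lemma rank_ge_2_if_minor_nonzero:
  assumes A: "(A :: 'a :: field mat) \<in> carrier_mat 2 n" and "j1 < j2" "j2 < n"
    and minor: "A $$ (0,j1) * A $$ (1,j2) - A $$ (0,j2) * A $$ (1,j1) \<noteq> 0"
  shows "2 \<le> vec_space.rank 2 A"
proof -
  have cols: "{k. k < n \<and> k \<in> {j1, j2}} = {j1, j2}" and card: "card {j1, j2} = 2"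
    using assms by auto
  have "submatrix A UNIV {j1, j2} \<in> carrier_mat 2 2"
    using A cols card by (auto simp: submatrix_def)
  then have "det (submatrix A UNIV {j1, j2}) = A $$ (0,j1) * A $$ (1,j2) - A $$ (0,j2) * A $$ (1,j1)"
    using A cols card pick_doubleton[OF \<open>j1 < j2\<close>]
    by (simp add: det_2x2 submatrix_def pick_UNIV)
  then show ?thesis
    using vec_space.rank_gt_minor[OF A, of UNIV "{j1, j2}"] minor cols card by simp
qed

lemma rank_le_1_if_rows_dependent:
  assumes A: "(A :: 'a :: field mat) \<in> carrier_mat 2 n" and PQ: "(P, Q) \<noteq> (0, 0)"
    and dep: "\<And>j. j < n \<Longrightarrow> P * A $$ (0,j) + Q * A $$ (1,j) = 0"
  shows "vec_space.rank 2 A \<le> 1"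
proof (rule vec_space.rank_le_1_product_entries[OF A])
  fix i j assume "i < dim_row A" "j < dim_col A"
  then have "i < 2" "j < n" using A by auto
  moreover have "P * A $$ (0,j) = - (Q * A $$ (1,j))"
    using dep[OF \<open>j < n\<close>] by (simp add: eq_neg_iff_add_eq_0)
  ultimately show "A $$ (i,j) = (if i = 0 then - Q else P) *
      (if P \<noteq> 0 then A $$ (1,j) / P else - A $$ (0,j) / Q)"
    using PQ by (auto simp: less_2_cases_iff field_simps)
qed

lemma nonzero_mat_obtain_entry:
  assumes "A \<in> carrier_mat m n" "A \<noteq> 0\<^sub>m m n"
  obtains i j where "i < m" "j < n" "A $$ (i,j) \<noteq> 0"
  using assms by (metis carrier_matD eq_matI index_zero_mat)

lemma rank_2xn_eq_1_iff:
  assumes A: "(A :: 'a :: field mat) \<in> carrier_mat 2 n"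
  shows "vec_space.rank 2 A = 1 \<longleftrightarrow>
    A \<noteq> 0\<^sub>m 2 n \<and> (\<exists>P Q. (P, Q) \<noteq> (0, 0) \<and> (\<forall>j<n. P * A $$ (0,j) + Q * A $$ (1,j) = 0))"
proof
  assume rank: "vec_space.rank 2 A = 1"
  then have "A \<noteq> 0\<^sub>m 2 n" by (auto simp: vec_space.rank_0I)
  then obtain i j where ij: "i < 2" "j < n" "A $$ (i,j) \<noteq> 0"
    using nonzero_mat_obtain_entry[OF A] by blast
  have "A $$ (1,j) * A $$ (0,k) - A $$ (0,j) * A $$ (1,k) = 0" if "k < n" for k
  proof (cases k j rule: linorder_cases)
    case less
    then show ?thesis
      using rank_ge_2_if_minor_nonzero[OF A less \<open>j < n\<close>] rank by (auto simp: algebra_simps)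
  next
    case greater
    then show ?thesis
      using rank_ge_2_if_minor_nonzero[OF A greater \<open>k < n\<close>] rank by (force simp: algebra_simps)
  qed simp
  moreover have "(A $$ (1,j), - A $$ (0,j)) \<noteq> (0, 0)"
    using ij by (auto simp: less_2_cases_iff)
  ultimately show "A \<noteq> 0\<^sub>m 2 n \<and> (\<exists>P Q. (P, Q) \<noteq> (0, 0) \<and> (\<forall>j<n. P * A $$ (0,j) + Q * A $$ (1,j) = 0))"
    using \<open>A \<noteq> 0\<^sub>m 2 n\<close> by (metis add_uminus_conv_diff mult_minus_left)
next
  assume "A \<noteq> 0\<^sub>m 2 n \<and> (\<exists>P Q. (P, Q) \<noteq> (0, 0) \<and> (\<forall>j<n. P * A $$ (0,j) + Q * A $$ (1,j) = 0))"
  then obtain P Q where nz: "A \<noteq> 0\<^sub>m 2 n" and "(P, Q) \<noteq> (0, 0)"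
    and "\<And>j. j < n \<Longrightarrow> P * A $$ (0,j) + Q * A $$ (1,j) = 0" by blast
  then have "vec_space.rank 2 A \<le> 1" by (intro rank_le_1_if_rows_dependent[OF A]) auto
  moreover obtain i j where "i < 2" "j < n" "A $$ (i,j) \<noteq> 0"
    using nonzero_mat_obtain_entry[OF A nz] by blast
  ultimately show "vec_space.rank 2 A = 1"
    using rank_ge_1_if_entry_nonzero[OF A] by fastforce
qed

lemma PHO_pot_cong:
  "(\<And>h. h \<le> d \<Longrightarrow> v h = w h) \<Longrightarrow> PHO_pot d v q1 q2 = PHO_pot d w q1 q2"
  unfolding PHO_pot_def by (intro sum.cong) auto

lemma PHO_pot_eq_imp_coeffs_eq:
  assumes "\<And>q1 q2. PHO_pot d v q1 q2 = PHO_pot d w q1 q2" and "h \<le> d"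
  shows "v h = w h"
proof -
  have "(\<Sum>k\<le>d. ((v k - w k) * real (d choose k)) * x ^ k) = 0" for x :: real
  proof -
    have "(\<Sum>k\<le>d. ((v k - w k) * real (d choose k)) * x ^ k) = PHO_pot d v x 1 - PHO_pot d w x 1"
      unfolding PHO_pot_def atLeast0AtMost sum_subtractf[symmetric]
      by (intro sum.cong) (simp_all add: algebra_simps)
    then show ?thesis using assms(1) by simp
  qed
  then have "\<forall>k\<le>d. (v k - w k) * real (d choose k) = 0"
    by (intro polyfun_eq_0[THEN iffD1] allI)
  then show ?thesis using assms(2) by simp
qed

lemma PHO_pot_nonzero_imp_coeff_nonzero:
  assumes "PHO_pot d v q1 q2 \<noteq> 0"
  shows "\<exists>h\<le>d. v h \<noteq> 0"
proof (rule ccontr)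
  assume "\<not> (\<exists>h\<le>d. v h \<noteq> 0)"
  then have "PHO_pot d v q1 q2 = 0"
    unfolding PHO_pot_def by (intro sum.neutral) auto
  with assms show False by blast
qed

definition sep_coeffs :: "nat \<Rightarrow> real \<Rightarrow> real \<Rightarrow> real \<Rightarrow> real \<Rightarrow> nat \<Rightarrow> real" where
  "sep_coeffs d a b c s h = a * s ^ h * c ^ (d - h) + b * c ^ h * (- s) ^ (d - h)"

lemma PHO_pot_sep_coeffs:
  "PHO_pot d (sep_coeffs d a b c s) q1 q2 = a * (s * q1 + c * q2) ^ d + b * (c * q1 - s * q2) ^ d"
proof -
  have "PHO_pot d (sep_coeffs d a b c s) q1 q2 =
     a * (\<Sum>h\<le>d. real (d choose h) * (s * q1) ^ h * (c * q2) ^ (d - h)) +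
     b * (\<Sum>h\<le>d. real (d choose h) * (c * q1) ^ h * (- s * q2) ^ (d - h))"
    unfolding PHO_pot_def sep_coeffs_def atLeast0AtMost sum_distrib_left sum.distrib[symmetric]
    by (intro sum.cong refl, simp only: power_mult_distrib, simp add: algebra_simps)
  also have "\<dots> = a * (s * q1 + c * q2) ^ d + b * (c * q1 + - s * q2) ^ d"
    by (simp only: binomial_ring)
  finally show ?thesis by simp
qed

lemma rotated_PHO_pot_eq_iff:
  assumes cs: "c\<^sup>2 + s\<^sup>2 = 1"
  shows "(\<forall>t1 t2. PHO_pot d v (c * t1 + s * t2) (- s * t1 + c * t2) = a * t2 ^ d + b * t1 ^ d)
    \<longleftrightarrow> (\<forall>h\<le>d. v h = sep_coeffs d a b c s h)"
proof
  assume rotated: "\<forall>t1 t2. PHO_pot d v (c * t1 + s * t2) (- s * t1 + c * t2) = a * t2 ^ d + b * t1 ^ d"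
  have "PHO_pot d v q1 q2 = PHO_pot d (sep_coeffs d a b c s) q1 q2" for q1 q2
  proof -
    have "c * (c * q1 - s * q2) + s * (s * q1 + c * q2) = (c\<^sup>2 + s\<^sup>2) * q1"
      and "- s * (c * q1 - s * q2) + c * (s * q1 + c * q2) = (c\<^sup>2 + s\<^sup>2) * q2"
      by (simp_all add: algebra_simps power2_eq_square)
    then show ?thesis
      using rotated[rule_format, of "c * q1 - s * q2" "s * q1 + c * q2"] cs
      by (simp add: PHO_pot_sep_coeffs)
  qed
  then show "\<forall>h\<le>d. v h = sep_coeffs d a b c s h"
    using PHO_pot_eq_imp_coeffs_eq by blast
next
  assume coeffs: "\<forall>h\<le>d. v h = sep_coeffs d a b c s h"
  show "\<forall>t1 t2. PHO_pot d v (c * t1 + s * t2) (- s * t1 + c * t2) = a * t2 ^ d + b * t1 ^ d"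
  proof (intro allI)
    fix t1 t2 :: real
    have "s * (c * t1 + s * t2) + c * (- s * t1 + c * t2) = (c\<^sup>2 + s\<^sup>2) * t2"
      and "c * (c * t1 + s * t2) - s * (- s * t1 + c * t2) = (c\<^sup>2 + s\<^sup>2) * t1"
      by (simp_all add: algebra_simps power2_eq_square)
    then show "PHO_pot d v (c * t1 + s * t2) (- s * t1 + c * t2) = a * t2 ^ d + b * t1 ^ d"
      using coeffs cs by (simp add: PHO_pot_cong[of d v "sep_coeffs d a b c s"] PHO_pot_sep_coeffs)
  qed
qed

definition rotation_recurrence :: "nat \<Rightarrow> (nat \<Rightarrow> real) \<Rightarrow> real \<Rightarrow> real \<Rightarrow> bool" where
  "rotation_recurrence d v c s \<longleftrightarrow>
     (\<forall>h. h + 2 \<le> d \<longrightarrow> c * s * (v h - v (h + 2)) = (c\<^sup>2 - s\<^sup>2) * v (h + 1))"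

lemma rotation_recurrence_sep_coeffs: "rotation_recurrence d (sep_coeffs d a b c s) c s"
  unfolding rotation_recurrence_def
proof (intro allI impI)
  fix h assume "h + 2 \<le> d"
  then obtain k where "d = h + 2 + k" using le_Suc_ex by blast
  then have "d - h = k + 2" "d - (h + 2) = k" "d - (h + 1) = k + 1" by simp_all
  then show "c * s * (sep_coeffs d a b c s h - sep_coeffs d a b c s (h + 2)) =
      (c\<^sup>2 - s\<^sup>2) * sep_coeffs d a b c s (h + 1)"
    unfolding sep_coeffs_def by (simp add: power_add power2_eq_square algebra_simps)
qed

lemma rotation_recurrence_unique:
  assumes "c * s \<noteq> 0" "rotation_recurrence d x c s" "rotation_recurrence d y c s"
    and "x 0 = y 0" "x 1 = y 1" "h \<le> d"
  shows "x h = y h"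
  using \<open>h \<le> d\<close>
proof (induction h rule: induct_nat_012)
  case (ge2 n)
  then have "c * s * (x n - x (n + 2)) = (c\<^sup>2 - s\<^sup>2) * x (n + 1)"
    and "c * s * (y n - y (n + 2)) = (c\<^sup>2 - s\<^sup>2) * y (n + 1)"
    using assms(2,3) unfolding rotation_recurrence_def by auto
  moreover have "x n = y n" "x (n + 1) = y (n + 1)" using ge2 by simp_all
  ultimately have "c * s * (x n - x (n + 2)) = c * s * (y n - y (n + 2))" by simp
  then show ?case using assms(1) \<open>x n = y n\<close> by simp
qed (use assms in auto)

lemma rotation_recurrence_on_axis_imp_sep_coeffs:
  assumes cs: "c\<^sup>2 + s\<^sup>2 = 1" and axis: "c * s = 0" and "0 < d"
    and rec: "rotation_recurrence d v c s"
  shows "\<exists>a b. \<forall>h\<le>d. v h = sep_coeffs d a b c s h"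
proof -
  have interior: "v h = 0" if "0 < h" "h < d" for h
  proof -
    obtain g where g: "h = g + 1" using \<open>0 < h\<close> by (metis Suc_eq_plus1 gr0_implies_Suc)
    then have "c * s * (v g - v (g + 2)) = (c\<^sup>2 - s\<^sup>2) * v h"
      using rec \<open>h < d\<close> unfolding rotation_recurrence_def by simp
    moreover have "c\<^sup>2 - s\<^sup>2 \<noteq> 0" using axis cs by auto
    ultimately show ?thesis using axis by simp
  qed
  show ?thesis
  proof (cases "c = 0")
    case True
    then have "s \<noteq> 0" using cs by auto
    then have "v h = sep_coeffs d (v d / s ^ d) (v 0 / (- s) ^ d) c s h" if "h \<le> d" for h
      using interior[of h] that \<open>0 < d\<close> True
      by (cases "h = 0"; cases "h = d") (auto simp: sep_coeffs_def power_0_left)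
    then show ?thesis by blast
  next
    case False
    then have "s = 0" "c \<noteq> 0" using axis by auto
    then have "v h = sep_coeffs d (v 0 / c ^ d) (v d / c ^ d) c s h" if "h \<le> d" for h
      using interior[of h] that \<open>0 < d\<close>
      by (cases "h = 0"; cases "h = d") (auto simp: sep_coeffs_def power_0_left)
    then show ?thesis by blast
  qed
qed

lemma rotation_recurrence_off_axis_imp_sep_coeffs:
  assumes cs: "c\<^sup>2 + s\<^sup>2 = 1" and off_axis: "c * s \<noteq> 0" and "0 < d"
    and rec: "rotation_recurrence d v c s"
  shows "\<exists>a b. \<forall>h\<le>d. v h = sep_coeffs d a b c s h"
proof -
  \<comment> \<open>(a c^(d-1), b (-s)^(d-1)) is (v 0, v 1) rotated by \<psi>; this makes the fit at h = 0, 1.\<close>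
  define a where "a = (c * v 0 + s * v 1) / c ^ (d - 1)"
  define b where "b = (c * v 1 - s * v 0) / (- s) ^ (d - 1)"
  have powers: "c ^ d = c * c ^ (d - 1)" "(- s) ^ d = - s * (- s) ^ (d - 1)"
    using \<open>0 < d\<close> by (simp_all flip: power_Suc)
  have "sep_coeffs d a b c s 0 = a * c ^ d + b * (- s) ^ d"
    by (simp add: sep_coeffs_def)
  also have "\<dots> = (c\<^sup>2 + s\<^sup>2) * v 0"
    using off_axis unfolding a_def b_def powers by (simp add: field_simps power2_eq_square)
  finally have "sep_coeffs d a b c s 0 = v 0" using cs by simp
  have "sep_coeffs d a b c s 1 = a * s * c ^ (d - 1) + b * c * (- s) ^ (d - 1)"
    by (simp add: sep_coeffs_def)
  also have "\<dots> = (c\<^sup>2 + s\<^sup>2) * v 1"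
    using off_axis unfolding a_def b_def by (simp add: field_simps power2_eq_square)
  finally have "sep_coeffs d a b c s 1 = v 1" using cs by simp
  with \<open>sep_coeffs d a b c s 0 = v 0\<close> show ?thesis
    using rotation_recurrence_unique[OF off_axis rec rotation_recurrence_sep_coeffs] by metis
qed

lemma sep_coeffs_iff_rotation_recurrence:
  assumes "c\<^sup>2 + s\<^sup>2 = 1" and "0 < d"
  shows "(\<exists>a b. \<forall>h\<le>d. v h = sep_coeffs d a b c s h) \<longleftrightarrow> rotation_recurrence d v c s"
proof
  assume "\<exists>a b. \<forall>h\<le>d. v h = sep_coeffs d a b c s h"
  then obtain a b where "\<forall>h\<le>d. v h = sep_coeffs d a b c s h" by blast
  with rotation_recurrence_sep_coeffs[of d a b c s] show "rotation_recurrence d v c s"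
    unfolding rotation_recurrence_def by simp
next
  assume "rotation_recurrence d v c s"
  then show "\<exists>a b. \<forall>h\<le>d. v h = sep_coeffs d a b c s h"
    using rotation_recurrence_on_axis_imp_sep_coeffs rotation_recurrence_off_axis_imp_sep_coeffs
      assms by blast
qed

lemma polar_half_angle:
  assumes "(P, Q) \<noteq> (0 :: real, 0)"
  obtains r \<psi> where "0 < r" "0 \<le> \<psi>" "\<psi> < pi" "P = r * sin (2 * \<psi>)" "Q = - r * cos (2 * \<psi>)"
proof -
  define r where "r = sqrt (P\<^sup>2 + Q\<^sup>2)"
  have "P\<^sup>2 + Q\<^sup>2 > 0" using assms by (auto simp: sum_power2_gt_zero_iff)
  then have "r > 0" and "r\<^sup>2 = P\<^sup>2 + Q\<^sup>2" unfolding r_def by simp_all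
  with assms have "(- Q / r)\<^sup>2 + (P / r)\<^sup>2 = 1"
    by (simp add: power_divide add_divide_distrib[symmetric])
  then obtain \<theta> where "0 \<le> \<theta>" "\<theta> < 2 * pi" "- Q / r = cos \<theta>" "P / r = sin \<theta>"
    using sincos_total_2pi by blast
  then show ?thesis
    using that[of r "\<theta> / 2"] \<open>r > 0\<close> by (simp add: field_simps)
qed

lemma PHO_matrix_carrier: "PHO_matrix d v \<in> carrier_mat 2 (d - 1)"
  unfolding PHO_matrix_def by simp

lemma PHO_matrix_entries:
  assumes "h < d - 1"
  shows "PHO_matrix d v $$ (0,h) = v h - v (h + 2)" "PHO_matrix d v $$ (1,h) = 2 * v (h + 1)"
  using assms unfolding PHO_matrix_def by simp_all

lemma PHO_matrix_nonzero:
  assumes "d \<ge> 3" and "\<exists>h\<le>d. v h \<noteq> 0"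
  shows "PHO_matrix d v \<noteq> 0\<^sub>m 2 (d - 1)"
proof
  assume zero: "PHO_matrix d v = 0\<^sub>m 2 (d - 1)"
  have shift: "v h = v (h + 2)" and interior: "v (h + 1) = 0" if "h + 2 \<le> d" for h
    using PHO_matrix_entries[of h d v] zero that by auto
  have "v h = 0" if "h \<le> d" for h
  proof -
    consider "h = 0" | "h = d" | "0 < h" "h < d" using \<open>h \<le> d\<close> by linarith
    then show ?thesis
    proof cases
      case 1
      then show ?thesis using shift[of 0] interior[of 1] \<open>d \<ge> 3\<close> by simp
    next
      case 2
      have "d - 2 + 2 = d" "d - 3 + 1 = d - 2" using \<open>d \<ge> 3\<close> by simp_all
      then show ?thesis using 2 shift[of "d - 2"] interior[of "d - 3"] by simp
    next
      case 3
      then show ?thesis using interior[of "h - 1"] by simp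
    qed
  qed
  then show False using assms(2) by blast
qed

lemma PHO_matrix_rows_dependent_iff:
  "(\<exists>P Q. (P, Q) \<noteq> (0, 0) \<and>
      (\<forall>h<d - 1. P * PHO_matrix d v $$ (0,h) + Q * PHO_matrix d v $$ (1,h) = 0))
    \<longleftrightarrow> (\<exists>\<psi>. 0 \<le> \<psi> \<and> \<psi> < 2 * pi \<and> rotation_recurrence d v (cos \<psi>) (sin \<psi>))"
  (is "?dependent \<longleftrightarrow> ?recurrence")
proof
  assume ?dependent
  then obtain P Q where "(P, Q) \<noteq> (0, 0)"
    and dep: "\<And>h. h < d - 1 \<Longrightarrow> P * PHO_matrix d v $$ (0,h) + Q * PHO_matrix d v $$ (1,h) = 0"
    by blast
  then obtain r \<psi> where "0 < r" "0 \<le> \<psi>" "\<psi> < pi"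
    and PQ: "P = r * sin (2 * \<psi>)" "Q = - r * cos (2 * \<psi>)"
    using polar_half_angle by metis
  have "rotation_recurrence d v (cos \<psi>) (sin \<psi>)"
    unfolding rotation_recurrence_def
  proof (intro allI impI)
    fix h assume "h + 2 \<le> d"
    then have h: "h < d - 1" by simp
    have "0 = P * PHO_matrix d v $$ (0,h) + Q * PHO_matrix d v $$ (1,h)"
      using dep[OF h] by simp
    also have "\<dots> = 2 * r * (cos \<psi> * sin \<psi> * (v h - v (h + 2)) -
        ((cos \<psi>)\<^sup>2 - (sin \<psi>)\<^sup>2) * v (h + 1))"
      unfolding PQ sin_double cos_double PHO_matrix_entries[OF h] by (simp add: algebra_simps)
    finally show "cos \<psi> * sin \<psi> * (v h - v (h + 2)) = ((cos \<psi>)\<^sup>2 - (sin \<psi>)\<^sup>2) * v (h + 1)"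
      using \<open>0 < r\<close> by simp
  qed
  moreover have "\<psi> < 2 * pi" using \<open>\<psi> < pi\<close> pi_gt_zero by linarith
  ultimately show ?recurrence using \<open>0 \<le> \<psi>\<close> by blast
next
  assume ?recurrence
  then obtain \<psi> where rec: "rotation_recurrence d v (cos \<psi>) (sin \<psi>)" by blast
  have "(sin (2 * \<psi>), - cos (2 * \<psi>)) \<noteq> (0, 0)"
    using sin_cos_squared_add[of "2 * \<psi>"] by (auto simp del: sin_cos_squared_add)
  moreover have "sin (2 * \<psi>) * PHO_matrix d v $$ (0,h) - cos (2 * \<psi>) * PHO_matrix d v $$ (1,h) = 0"
    if h: "h < d - 1" for h
  proof -
    have "sin (2 * \<psi>) * PHO_matrix d v $$ (0,h) - cos (2 * \<psi>) * PHO_matrix d v $$ (1,h) =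
        2 * (cos \<psi> * sin \<psi> * (v h - v (h + 2)) - ((cos \<psi>)\<^sup>2 - (sin \<psi>)\<^sup>2) * v (h + 1))"
      unfolding sin_double cos_double PHO_matrix_entries[OF h] by (simp add: algebra_simps)
    also have "\<dots> = 0"
      using rec h unfolding rotation_recurrence_def by simp
    finally show ?thesis .
  qed
  ultimately show ?dependent by (metis add_uminus_conv_diff mult_minus_left)
qed

theorem mainTheorem3:
  fixes d :: nat and v :: "nat \<Rightarrow> real"
  assumes "d \<ge> 3"
    and "\<exists>q1 q2. PHO_pot d v q1 q2 \<noteq> 0"
  shows "separable_within_rotation d v \<longleftrightarrow> vec_space.rank 2 (PHO_matrix d v) = 1"
proof -
  have coeff_nonzero: "\<exists>h\<le>d. v h \<noteq> 0"
    using assms(2) PHO_pot_nonzero_imp_coeff_nonzero by blast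
  have nontrivial: "(a, b) \<noteq> (0, 0)" if "\<forall>h\<le>d. v h = sep_coeffs d a b c s h" for a b c s
    using that coeff_nonzero by (auto simp: sep_coeffs_def)
  have "separable_within_rotation d v \<longleftrightarrow>
      (\<exists>\<psi>. 0 \<le> \<psi> \<and> \<psi> < 2 * pi \<and> (\<exists>a b. \<forall>h\<le>d. v h = sep_coeffs d a b (cos \<psi>) (sin \<psi>) h))"
    unfolding separable_within_rotation_def rotated_PHO_pot_eq_iff[OF sin_cos_squared_add2]
    using nontrivial by meson
  also have "\<dots> \<longleftrightarrow> (\<exists>\<psi>. 0 \<le> \<psi> \<and> \<psi> < 2 * pi \<and> rotation_recurrence d v (cos \<psi>) (sin \<psi>))"
    using sep_coeffs_iff_rotation_recurrence[OF sin_cos_squared_add2] assms(1) by simp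
  also have "\<dots> \<longleftrightarrow> vec_space.rank 2 (PHO_matrix d v) = 1"
    unfolding PHO_matrix_rows_dependent_iff[symmetric] rank_2xn_eq_1_iff[OF PHO_matrix_carrier]
    using PHO_matrix_nonzero[OF assms(1) coeff_nonzero] by simp
  finally show ?thesis .
qed

end
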